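(* Consider the classical spin triangle with Heisenberg Hamiltonian $H(\mathbf{s})=J_1\,\mathbf{s}_2\cdot\mathbf{s}_3+J_2\,\mathbf{s}_3\cdot\mathbf{s}_1+J_3\,\mathbf{s}_1\cdot\mathbf{s}_2$ with unit spin vectors $\mathbf{s}_1,\mathbf{s}_2,\mathbf{s}_3$, and write the Gram matrix of a spin configuration as $G=\begin{pmatrix}1&u&v\\ u&1&w\\ v&w&1\end{pmatrix}$, i.e. $u=\mathbf{s}_1\cdot\mathbf{s}_2$, $v=\mathbf{s}_1\cdot\mathbf{s}_3$, $w=\mathbf{s}_2\cdot\mathbf{s}_3$, so that $H=J_1 w+J_2 v+J_3 u$ and $\det G=1+2uvw-(u^2+v^2+w^2)$. Let $\mathbf{J}=(J_1,J_2,J_3)$ and let $\mathbf{E}_0=(1,1,1)$, $\mathbf{E}_1=(1,-1,-1)$, $\mathbf{E}_2=(-1,1,-1)$, $\mathbf{E}_3=(-1,-1,1)$ be the coordinate vectors $(w,v,u)$ of the four Ising Gram matrices. If $\mathbf{J}$ satisfies none of the four conditions $\mathbf{J}\cdot\mathbf{E}_i\le-\|\mathbf{J}\|$ ($i=0,1,2,3$), then the ground states are co-planar, with $\det G=0$ and $-1<u,v,w<1$, and $\mathbf{J}$ is proportional to the gradient of $\mathcal{D}=\det G$: $J_1=2\mu(uv-w)$, $J_2=2\mu(wu-v)$, $J_3=2\mu(vw-u)$. Solving these together with $\mathcal{D}=0$ gives $$u=\frac{J_1}{2J_2}\Big(\frac{J_2^2}{J_3^2}-1\Big)-\frac{J_2}{2J_1},\quad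 v=\frac{J_1}{2J_3}\Big(\frac{J_3^2}{J_2^2}-1\Big)-\frac{J_3}{2J_1},\quad w=\frac{J_2}{2J_3}\Big(\frac{J_3^2}{J_1^2}-1\Big)-\frac{J_3}{2J_2},$$ $$\mu=\frac{-2J_1^3J_2^3J_3^3}{J_1^4(J_2^2-J_3^2)^2-2J_1^2J_2^2J_3^2(J_2^2+J_3^2)+J_2^4J_3^4},$$ and the ground state energy is $E_{min}=J_1w+J_2v+J_3u$.
   Context: Classical spin triangle ($N=3$); Gram set $\mathcal{G}=\{G\ge 0,\ G_{\mu\mu}=1\}$ parametrized by $(u,v,w)$; ground states correspond to boundary points of $\mathcal{G}$ where the affine functional $(u,v,w)\mapsto J_1w+J_2v+J_3u$ is minimal. *)

theory Defs
  imports "HOL-Analysis.Analysis"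
begin

definition spin_energy :: "real^3 \<Rightarrow> real^3 \<Rightarrow> real^3 \<Rightarrow> real^3 \<Rightarrow> real" where
  "spin_energy J s1 s2 s3 = J$1 * (s2 \<bullet> s3) + J$2 * (s3 \<bullet> s1) + J$3 * (s1 \<bullet> s2)"

definition unit_spins :: "real^3 \<Rightarrow> real^3 \<Rightarrow> real^3 \<Rightarrow> bool" where
  "unit_spins s1 s2 s3 \<longleftrightarrow> norm s1 = 1 \<and> norm s2 = 1 \<and> norm s3 = 1"

definition ground_state :: "real^3 \<Rightarrow> real^3 \<Rightarrow> real^3 \<Rightarrow> real^3 \<Rightarrow> bool" where
  "ground_state J s1 s2 s3 \<longleftrightarrow> unit_spins s1 s2 s3 \<and>
     (\<forall>t1 t2 t3. unit_spins t1 t2 t3 \<longrightarrow> spin_energy J s1 s2 s3 \<le> spin_energy J t1 t2 t3)"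

definition E_min :: "real^3 \<Rightarrow> real" where
  "E_min J = (INF s \<in> {(s1,s2,s3). unit_spins s1 s2 s3}. (case s of (s1,s2,s3) \<Rightarrow> spin_energy J s1 s2 s3))"

text \<open>Determinant of the Gram matrix [[1,u,v],[u,1,w],[v,w,1]].\<close>
definition gram_det :: "real \<Rightarrow> real \<Rightarrow> real \<Rightarrow> real" where
  "gram_det x y z = 1 + 2 * x * y * z - (x^2 + y^2 + z^2)"

text \<open>Ising Gram coordinate vectors (w,v,u).\<close>
definition E_ising :: "nat \<Rightarrow> real^3" where
  "E_ising i = (if i = 0 then vector [1, 1, 1] else if i = 1 then vector [1, -1, -1]
               else if i = 2 then vector [-1, 1, -1] else vector [-1, -1, 1])"

end

theory Submission
  imports Defs
begin

text \<open>
  If \<open>J\<close> avoids the four Ising cones then \<open>J\<^sub>1J\<^sub>2J\<^sub>3 > 0\<close>, so the couplings factor as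
  \<open>J\<^sub>1 = bc\<close>, \<open>J\<^sub>2 = ac\<close>, \<open>J\<^sub>3 = ab\<close>, and the remaining conditions say that \<open>|a|, |b|, |c|\<close> satisfy
  the strict triangle inequalities. Completing the square,
  \<open>H = (\<parallel>a s\<^sub>1 + b s\<^sub>2 + c s\<^sub>3\<parallel>\<^sup>2 - a\<^sup>2 - b\<^sup>2 - c\<^sup>2) / 2\<close>, so the ground states are exactly the
  unit spins with \<open>a s\<^sub>1 + b s\<^sub>2 + c s\<^sub>3 = 0\<close>: the vectors \<open>a s\<^sub>1, b s\<^sub>2, c s\<^sub>3\<close> close a planar triangle,
  which exists precisely because of the triangle inequalities. Its angles are fixed by the law of
  cosines, and the closed forms for \<open>u, v, w, \<mu>\<close> are rational identities in \<open>a, b, c\<close>.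
\<close>

text \<open>\<open>\<not> J \<bullet> E\<^sub>i \<le> -\<parallel>J\<parallel>\<close> means \<open>J \<bullet> E\<^sub>i > 0\<close> or \<open>(J \<bullet> E\<^sub>i)\<^sup>2 < \<parallel>J\<parallel>\<^sup>2\<close>; these are the four
  instances for the Ising vectors \<open>E\<^sub>0, \<dots>, E\<^sub>3\<close>.\<close>

definition frustrated :: "real \<Rightarrow> real \<Rightarrow> real \<Rightarrow> bool" where
  "frustrated J1 J2 J3 \<longleftrightarrow>
     (J1 + J2 + J3 > 0 \<or> (J1 + J2 + J3)^2 < J1^2 + J2^2 + J3^2) \<and>
     (J1 - J2 - J3 > 0 \<or> (J1 - J2 - J3)^2 < J1^2 + J2^2 + J3^2) \<and>
     (J2 - J1 - J3 > 0 \<or> (J2 - J1 - J3)^2 < J1^2 + J2^2 + J3^2) \<and>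
     (J3 - J1 - J2 > 0 \<or> (J3 - J1 - J2)^2 < J1^2 + J2^2 + J3^2)"

lemma frustrated_iff:
  "frustrated J1 J2 J3 \<longleftrightarrow>
     (J1 + J2 + J3 > 0 \<or> J1*J2 + J1*J3 + J2*J3 < 0) \<and>
     (J1 - J2 - J3 > 0 \<or> J2*J3 - J1*J2 - J1*J3 < 0) \<and>
     (J2 - J1 - J3 > 0 \<or> J1*J3 - J1*J2 - J2*J3 < 0) \<and>
     (J3 - J1 - J2 > 0 \<or> J1*J2 - J1*J3 - J2*J3 < 0)"
  unfolding frustrated_def by (auto simp: power2_eq_square algebra_simps)

text \<open>If the product were not positive, flipping two signs would move \<open>J\<close> into \<open>J \<le> 0\<close>
  componentwise, where the corresponding Ising condition holds.\<close>

lemma frustrated_imp_prod_pos: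
  assumes "frustrated J1 J2 J3"
  shows "J1 * J2 * J3 > 0"
proof (rule ccontr)
  note N = assms[unfolded frustrated_iff]
  assume "\<not> J1 * J2 * J3 > 0"
  then consider "J1 \<le> 0" "J2 \<ge> 0" "J3 \<ge> 0" | "J1 \<ge> 0" "J2 \<le> 0" "J3 \<ge> 0"
    | "J1 \<ge> 0" "J2 \<ge> 0" "J3 \<le> 0" | "J1 \<le> 0" "J2 \<le> 0" "J3 \<le> 0"
    by (smt (verit) mult_pos_pos mult_neg_neg mult_pos_neg mult_neg_pos)
  then show False
  proof cases
    case 1
    then show ?thesis
      using N by (smt (verit) mult_nonneg_nonneg mult_nonpos_nonneg mult_nonneg_nonpos)
  next
    case 2
    then show ?thesis
      using N by (smt (verit) mult_nonneg_nonneg mult_nonpos_nonneg mult_nonneg_nonpos)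
  next
    case 3
    then show ?thesis
      using N by (smt (verit) mult_nonneg_nonneg mult_nonpos_nonneg mult_nonneg_nonpos)
  next
    case 4
    then show ?thesis
      using N by (smt (verit) mult_nonpos_nonpos)
  qed
qed

lemma mult_lt_mult_add_if_gt_add:
  fixes x y z :: real
  assumes "x > 0" "y > 0" "z > 0" and "x > y + z \<or> y * z < x * (y + z)"
  shows "y * z < x * (y + z)"
  using assms(4)
proof
  assume "x > y + z"
  then have "(y + z) * (y + z) < x * (y + z)"
    using assms(2,3) by (simp add: mult_strict_right_mono)
  moreover have "y * z < (y + z) * (y + z)"
    using assms(2,3) by (simp add: algebra_simps add_pos_pos)
  ultimately show ?thesis by linarith
qed

lemma frustrated_imp_triangle:
  assumes "frustrated J1 J2 J3"
  shows "\<bar>J2*J3\<bar> < \<bar>J1*J3\<bar> + \<bar>J1*J2\<bar> \<and> \<bar>J1*J3\<bar> < \<bar>J1*J2\<bar> + \<bar>J2*J3\<bar> \<and>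
         \<bar>J1*J2\<bar> < \<bar>J1*J3\<bar> + \<bar>J2*J3\<bar>"
proof -
  note N = assms[unfolded frustrated_iff]
  note H = mult_lt_mult_add_if_gt_add
  consider "J1 > 0" "J2 > 0" "J3 > 0" | "J1 > 0" "J2 < 0" "J3 < 0"
    | "J1 < 0" "J2 > 0" "J3 < 0" | "J1 < 0" "J2 < 0" "J3 > 0"
    using frustrated_imp_prod_pos[OF assms]
    by (smt (verit) mult_nonneg_nonneg mult_nonpos_nonpos mult_nonneg_nonpos mult_nonpos_nonneg)
  then show ?thesis
  proof cases
    case 1
    then show ?thesis
      using H[of J1 J2 J3] H[of J2 J1 J3] H[of J3 J1 J2] N by (auto simp: abs_mult algebra_simps)
  next
    case 2
    then show ?thesis
      using H[of J1 "-J2" "-J3"] H[of "-J2" J1 "-J3"] H[of "-J3" J1 "-J2"] N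
      by (auto simp: abs_mult algebra_simps)
  next
    case 3
    then show ?thesis
      using H[of "-J1" J2 "-J3"] H[of J2 "-J1" "-J3"] H[of "-J3" "-J1" J2] N
      by (auto simp: abs_mult algebra_simps)
  next
    case 4
    then show ?thesis
      using H[of "-J1" "-J2" J3] H[of "-J2" "-J1" J3] H[of J3 "-J1" "-J2"] N
      by (auto simp: abs_mult algebra_simps)
  qed
qed

lemma factor_of_prod_pos:
  fixes J1 J2 J3 :: real
  assumes "J1 * J2 * J3 > 0"
  obtains a b c where "J1 = b * c" "J2 = a * c" "J3 = a * b"
proof -
  have "J1 \<noteq> 0"
    using assms by auto
  have "J2 * J3 / J1 = J1 * J2 * J3 / J1^2"
    using \<open>J1 \<noteq> 0\<close> by (simp add: field_simps power2_eq_square)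
  then have "J2 * J3 / J1 > 0"
    using assms \<open>J1 \<noteq> 0\<close> by simp
  define a where "a = sqrt (J2 * J3 / J1)"
  have "a > 0" "a^2 = J2 * J3 / J1"
    unfolding a_def using \<open>J2 * J3 / J1 > 0\<close> by simp_all
  then have "J1 = (J3 / a) * (J2 / a)" "J2 = a * (J2 / a)" "J3 = a * (J3 / a)"
    using \<open>J1 \<noteq> 0\<close> by (simp_all add: field_simps power2_eq_square)
  then show ?thesis by (rule that)
qed

lemma inner_vec3: "(x::real^3) \<bullet> y = x$1 * y$1 + x$2 * y$2 + x$3 * y$3"
  by (simp add: inner_vec_def sum_3)

lemma not_le_neg_norm_imp:
  fixes J E :: "'a::real_inner"
  assumes "\<not> J \<bullet> E \<le> - norm J"
  shows "J \<bullet> E > 0 \<or> (J \<bullet> E)^2 < (norm J)^2"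
proof (rule ccontr)
  assume "\<not> ?thesis"
  then have "J \<bullet> E \<le> 0" "norm J \<le> \<bar>J \<bullet> E\<bar>"
    using abs_le_square_iff[of "norm J" "J \<bullet> E"] by auto
  then show False using assms by linarith
qed

lemma frustrated_if_not_ising:
  fixes J :: "real^3"
  assumes "\<forall>i\<in>{0,1,2,3::nat}. \<not> (J \<bullet> E_ising i \<le> - norm J)"
  shows "frustrated (J$1) (J$2) (J$3)"
proof -
  have "(norm J)^2 = (J$1)^2 + (J$2)^2 + (J$3)^2"
    unfolding power2_norm_eq_inner inner_vec3 by (simp add: power2_eq_square)
  moreover have "J \<bullet> E_ising 0 = J$1 + J$2 + J$3" "J \<bullet> E_ising 1 = J$1 - J$2 - J$3"
    "J \<bullet> E_ising 2 = J$2 - J$1 - J$3" "J \<bullet> E_ising 3 = J$3 - J$1 - J$2"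
    by (simp_all add: E_ising_def inner_vec3)
  ultimately show ?thesis
    unfolding frustrated_def using assms not_le_neg_norm_imp[of J] by (metis insert_iff)
qed

text \<open>Sixteen times the squared area of a triangle with sides \<open>|a|, |b|, |c|\<close> (Heron).\<close>

definition heron :: "real \<Rightarrow> real \<Rightarrow> real \<Rightarrow> real" where
  "heron a b c = 2 * (a^2 * b^2 + b^2 * c^2 + c^2 * a^2) - a^4 - b^4 - c^4"

lemma heron_commute: "heron b a c = heron a b c" "heron a c b = heron a b c"
  unfolding heron_def by algebra+

lemma heron_eq_prod:
  "heron a b c = (\<bar>a\<bar> + \<bar>b\<bar> + \<bar>c\<bar>) * (\<bar>b\<bar> + \<bar>c\<bar> - \<bar>a\<bar>) * (\<bar>a\<bar> + \<bar>c\<bar> - \<bar>b\<bar>) * (\<bar>a\<bar> + \<bar>b\<bar> - \<bar>c\<bar>)"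
proof -
  have "heron a b c = heron \<bar>a\<bar> \<bar>b\<bar> \<bar>c\<bar>"
    by (simp add: heron_def power_even_abs)
  also have "\<dots> = (\<bar>a\<bar> + \<bar>b\<bar> + \<bar>c\<bar>) * (\<bar>b\<bar> + \<bar>c\<bar> - \<bar>a\<bar>) * (\<bar>a\<bar> + \<bar>c\<bar> - \<bar>b\<bar>) * (\<bar>a\<bar> + \<bar>b\<bar> - \<bar>c\<bar>)"
    unfolding heron_def by algebra
  finally show ?thesis .
qed

lemma heron_pos:
  assumes "\<bar>a\<bar> < \<bar>b\<bar> + \<bar>c\<bar>" "\<bar>b\<bar> < \<bar>a\<bar> + \<bar>c\<bar>" "\<bar>c\<bar> < \<bar>a\<bar> + \<bar>b\<bar>"
  shows "heron a b c > 0"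
  unfolding heron_eq_prod using assms by (simp add: mult_pos_pos)

lemma frustrated_factorization:
  assumes "frustrated J1 J2 J3"
  obtains a b c where "a \<noteq> 0" "b \<noteq> 0" "c \<noteq> 0" "heron a b c > 0"
    and "J1 = b * c" "J2 = a * c" "J3 = a * b"
proof -
  have pos: "J1 * J2 * J3 > 0"
    using frustrated_imp_prod_pos[OF assms] .
  obtain a b c where J: "J1 = b * c" "J2 = a * c" "J3 = a * b"
    using factor_of_prod_pos[OF pos] .
  have "a \<noteq> 0" "b \<noteq> 0" "c \<noteq> 0"
    using pos unfolding J by auto
  then have "\<bar>a * b * c\<bar> > 0" by simp
  moreover have "\<bar>a\<bar> * \<bar>a * b * c\<bar> < (\<bar>b\<bar> + \<bar>c\<bar>) * \<bar>a * b * c\<bar>"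
    and "\<bar>b\<bar> * \<bar>a * b * c\<bar> < (\<bar>a\<bar> + \<bar>c\<bar>) * \<bar>a * b * c\<bar>"
    and "\<bar>c\<bar> * \<bar>a * b * c\<bar> < (\<bar>a\<bar> + \<bar>b\<bar>) * \<bar>a * b * c\<bar>"
    using frustrated_imp_triangle[OF assms] unfolding J
    by (simp_all add: abs_mult algebra_simps power2_eq_square)
  ultimately have "heron a b c > 0"
    by (intro heron_pos) (simp_all add: mult_less_cancel_right)
  then show ?thesis
    using that \<open>a \<noteq> 0\<close> \<open>b \<noteq> 0\<close> \<open>c \<noteq> 0\<close> J by blast
qed

definition closing_cos :: "real \<Rightarrow> real \<Rightarrow> real \<Rightarrow> real" where
  "closing_cos a b c = (c^2 - a^2 - b^2) / (2 * a * b)"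

lemma one_minus_closing_cos_sq:
  assumes "a \<noteq> 0" "b \<noteq> 0"
  shows "1 - (closing_cos a b c)^2 = heron a b c / (4 * a^2 * b^2)"
  unfolding closing_cos_def heron_def using assms by (simp add: field_simps) algebra

lemma abs_closing_cos_less_one:
  assumes "a \<noteq> 0" "b \<noteq> 0" "heron a b c > 0"
  shows "\<bar>closing_cos a b c\<bar> < 1"
proof -
  have "1 - (closing_cos a b c)^2 > 0"
    using assms by (simp add: one_minus_closing_cos_sq)
  then show ?thesis by (simp add: abs_square_less_1)
qed

lemma closing_cos_of_couplings:
  assumes "a \<noteq> 0" "b \<noteq> 0" "c \<noteq> 0" "J1 = b * c" "J2 = a * c" "J3 = a * b"
  shows "J1/(2 * J2) * (J2^2/J3^2 - 1) - J2/(2 * J1) = closing_cos a b c"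
    and "J1/(2 * J3) * (J3^2/J2^2 - 1) - J3/(2 * J1) = closing_cos a c b"
    and "J2/(2 * J3) * (J3^2/J1^2 - 1) - J3/(2 * J2) = closing_cos b c a"
  using assms unfolding closing_cos_def by (simp_all add: field_simps power2_eq_square)

lemma multiplier_of_couplings:
  assumes "J1 = b * c" "J2 = a * c" "J3 = a * b"
  shows "- 2 * J1^3 * J2^3 * J3^3 /
           (J1^4 * (J2^2 - J3^2)^2 - 2 * J1^2 * J2^2 * J3^2 * (J2^2 + J3^2) + J2^4 * J3^4)
         = 2 * a^2 * b^2 * c^2 / heron a b c"
proof -
  have denom: "J1^4 * (J2^2 - J3^2)^2 - 2 * J1^2 * J2^2 * J3^2 * (J2^2 + J3^2) + J2^4 * J3^4
        = - ((a * b * c)^4 * heron a b c)"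
    unfolding assms heron_def by algebra
  have numer: "- 2 * J1^3 * J2^3 * J3^3 = - ((a * b * c)^4 * (2 * a^2 * b^2 * c^2))"
    unfolding assms by algebra
  show ?thesis
    unfolding denom numer by (cases "a * b * c = 0") simp_all
qed

lemma closing_cos_lagrange:
  assumes "a \<noteq> 0" "b \<noteq> 0" "c \<noteq> 0" "heron a b c \<noteq> 0"
  defines "\<mu> \<equiv> 2 * a^2 * b^2 * c^2 / heron a b c"
  shows "b * c = 2 * \<mu> * (closing_cos a b c * closing_cos a c b - closing_cos b c a)"
    and "a * c = 2 * \<mu> * (closing_cos b c a * closing_cos a b c - closing_cos a c b)"
    and "a * b = 2 * \<mu> * (closing_cos a c b * closing_cos b c a - closing_cos a b c)"
proof -
  have cross: "closing_cos a b c * closing_cos a c b - closing_cos b c a = heron a b c / (4 * a^2 * b * c)"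
       "closing_cos b c a * closing_cos a b c - closing_cos a c b = heron a b c / (4 * a * b^2 * c)"
       "closing_cos a c b * closing_cos b c a - closing_cos a b c = heron a b c / (4 * a * b * c^2)"
    using assms(1-3) unfolding closing_cos_def heron_def by (simp_all add: field_simps) algebra+
  show "b * c = 2 * \<mu> * (closing_cos a b c * closing_cos a c b - closing_cos b c a)"
    and "a * c = 2 * \<mu> * (closing_cos b c a * closing_cos a b c - closing_cos a c b)"
    and "a * b = 2 * \<mu> * (closing_cos a c b * closing_cos b c a - closing_cos a b c)"
    unfolding \<mu>_def cross using assms(1-4) by (simp_all add: field_simps power2_eq_square)
qed

lemma gram_det_closing_cos:
  assumes "a \<noteq> 0" "b \<noteq> 0" "c \<noteq> 0"
  shows "gram_det (closing_cos a b c) (closing_cos a c b) (closing_cos b c a) = 0"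
  using assms unfolding closing_cos_def gram_det_def by (simp add: field_simps) algebra

lemma closing_cos_energy:
  assumes "a \<noteq> 0" "b \<noteq> 0" "c \<noteq> 0"
  shows "b * c * closing_cos b c a + a * c * closing_cos a c b + a * b * closing_cos a b c
         = - (a^2 + b^2 + c^2) / 2"
  using assms unfolding closing_cos_def by (simp add: field_simps power2_eq_square)

lemma norm_combination_sq:
  fixes x y :: "'a::real_inner"
  assumes "norm x = 1" "norm y = 1"
  shows "(norm (a *\<^sub>R x + b *\<^sub>R y))^2 = a^2 + b^2 + 2 * a * b * (x \<bullet> y)"
proof -
  have "x \<bullet> x = 1" "y \<bullet> y = 1"
    using assms by (simp_all add: dot_square_norm)
  then show ?thesis
    unfolding power2_norm_eq_inner
    by (simp add: inner_add_left inner_add_right inner_commute[of y x] algebra_simps power2_eq_square)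
qed

lemma norm_combination3_sq:
  fixes x y z :: "'a::real_inner"
  assumes "norm x = 1" "norm y = 1" "norm z = 1"
  shows "(norm (a *\<^sub>R x + b *\<^sub>R y + c *\<^sub>R z))^2
         = a^2 + b^2 + c^2 + 2 * (b * c * (y \<bullet> z) + a * c * (z \<bullet> x) + a * b * (x \<bullet> y))"
proof -
  have "x \<bullet> x = 1" "y \<bullet> y = 1" "z \<bullet> z = 1"
    using assms by (simp_all add: dot_square_norm)
  then show ?thesis
    unfolding power2_norm_eq_inner
    by (simp add: inner_add_left inner_add_right inner_commute[of y x] inner_commute[of z x]
        inner_commute[of z y] algebra_simps power2_eq_square)
qed

lemma spin_energy_eq_norm:
  assumes "unit_spins s1 s2 s3" "J$1 = b * c" "J$2 = a * c" "J$3 = a * b"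
  shows "spin_energy J s1 s2 s3 = ((norm (a *\<^sub>R s1 + b *\<^sub>R s2 + c *\<^sub>R s3))^2 - (a^2 + b^2 + c^2)) / 2"
  using assms norm_combination3_sq[of s1 s2 s3 a b c]
  unfolding spin_energy_def unit_spins_def by (simp add: algebra_simps)

lemma inner_eq_closing_cos:
  fixes x y z :: "'a::real_inner"
  assumes "norm x = 1" "norm y = 1" "norm z = 1" "a \<noteq> 0" "b \<noteq> 0"
    and "a *\<^sub>R x + b *\<^sub>R y + c *\<^sub>R z = 0"
  shows "x \<bullet> y = closing_cos a b c"
proof -
  have "a *\<^sub>R x + b *\<^sub>R y = - (c *\<^sub>R z)"
    using assms(6) by (simp add: eq_neg_iff_add_eq_0)
  then have "a^2 + b^2 + 2 * a * b * (x \<bullet> y) = c^2"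
    using norm_combination_sq[OF assms(1,2), of a b] assms(3) by (simp add: power_mult_distrib)
  then show ?thesis
    unfolding closing_cos_def using assms(4,5) by (simp add: field_simps)
qed

lemma inner_eq_closing_cos_of_combination:
  fixes s1 s2 s3 :: "'a::real_inner"
  assumes "norm s1 = 1" "norm s2 = 1" "norm s3 = 1" "a \<noteq> 0" "b \<noteq> 0" "c \<noteq> 0"
    and "a *\<^sub>R s1 + b *\<^sub>R s2 + c *\<^sub>R s3 = 0"
  shows "s1 \<bullet> s2 = closing_cos a b c" "s1 \<bullet> s3 = closing_cos a c b" "s2 \<bullet> s3 = closing_cos b c a"
proof -
  have "a *\<^sub>R s1 + c *\<^sub>R s3 + b *\<^sub>R s2 = 0" "b *\<^sub>R s2 + c *\<^sub>R s3 + a *\<^sub>R s1 = 0"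
    using assms(7) by (simp_all add: algebra_simps)
  then show "s1 \<bullet> s2 = closing_cos a b c" "s1 \<bullet> s3 = closing_cos a c b" "s2 \<bullet> s3 = closing_cos b c a"
    using inner_eq_closing_cos assms by metis+
qed

lemma dim_le_2_of_combination_eq_0:
  fixes x y z :: "'a::euclidean_space"
  assumes "a \<noteq> 0" "a *\<^sub>R x + b *\<^sub>R y + c *\<^sub>R z = 0"
  shows "dim {x, y, z} \<le> 2"
proof -
  have "a *\<^sub>R x = - (b *\<^sub>R y + c *\<^sub>R z)"
    using assms(2) by (metis add.assoc eq_neg_iff_add_eq_0)
  then have "x = (1 / a) *\<^sub>R - (b *\<^sub>R y + c *\<^sub>R z)"
    using assms(1) by (metis scaleR_scaleR divide_self_if scaleR_one times_divide_eq_left mult_1)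
  then have "x \<in> span {y, z}"
    by (simp add: span_diff span_scale span_neg span_base)
  then have "{x, y, z} \<subseteq> span {y, z}"
    by (auto intro: span_base)
  then have "dim {x, y, z} \<le> card {y, z}"
    by (simp add: dim_le_card)
  also have "\<dots> \<le> 2"
    by (simp add: card_insert_if)
  finally show ?thesis .
qed

lemma closing_triangle_exists:
  assumes "a \<noteq> 0" "b \<noteq> 0" "c \<noteq> 0" "\<bar>closing_cos a b c\<bar> \<le> 1"
  shows "\<exists>s1 s2 s3 :: real^3. unit_spins s1 s2 s3 \<and> a *\<^sub>R s1 + b *\<^sub>R s2 + c *\<^sub>R s3 = 0"
proof -
  define U where "U = closing_cos a b c"
  define s1 :: "real^3" where "s1 = vector [1, 0, 0]"
  define s2 :: "real^3" where "s2 = vector [U, sqrt (1 - U^2), 0]"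
  define s3 :: "real^3" where "s3 = (- 1 / c) *\<^sub>R (a *\<^sub>R s1 + b *\<^sub>R s2)"
  have "U^2 \<le> 1"
    using assms(4) unfolding U_def by (simp add: abs_square_le_1)
  then have n1: "norm s1 = 1" and n2: "norm s2 = 1"
    unfolding s1_def s2_def by (simp_all add: norm_eq_sqrt_inner inner_vec3 power2_eq_square[symmetric])
  have "s1 \<bullet> s2 = U"
    unfolding s1_def s2_def by (simp add: inner_vec3)
  then have "(norm (a *\<^sub>R s1 + b *\<^sub>R s2))^2 = c^2"
    unfolding norm_combination_sq[OF n1 n2] U_def closing_cos_def using assms(1,2) by (simp add: field_simps)
  then have "norm (a *\<^sub>R s1 + b *\<^sub>R s2) = \<bar>c\<bar>"
    using real_sqrt_abs real_sqrt_unique by (metis norm_ge_zero)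
  then have "norm s3 = 1"
    using assms(3) by (simp add: s3_def)
  moreover have "a *\<^sub>R s1 + b *\<^sub>R s2 + c *\<^sub>R s3 = 0"
    using assms(3) by (simp add: s3_def)
  ultimately show ?thesis
    using n1 n2 unfolding unit_spins_def by blast
qed

lemma spin_energy_lower_bound:
  assumes "unit_spins s1 s2 s3" "J$1 = b * c" "J$2 = a * c" "J$3 = a * b"
  shows "- (a^2 + b^2 + c^2) / 2 \<le> spin_energy J s1 s2 s3"
    and "spin_energy J s1 s2 s3 = - (a^2 + b^2 + c^2) / 2 \<longleftrightarrow> a *\<^sub>R s1 + b *\<^sub>R s2 + c *\<^sub>R s3 = 0"
  unfolding spin_energy_eq_norm[OF assms] by auto

lemma ground_state_iff_combination_eq_0:
  assumes couplings: "J$1 = b * c" "J$2 = a * c" "J$3 = a * b"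
    and closing: "unit_spins t1 t2 t3" "a *\<^sub>R t1 + b *\<^sub>R t2 + c *\<^sub>R t3 = 0"
  shows "ground_state J s1 s2 s3 \<longleftrightarrow> unit_spins s1 s2 s3 \<and> a *\<^sub>R s1 + b *\<^sub>R s2 + c *\<^sub>R s3 = 0"
proof -
  have min: "spin_energy J t1 t2 t3 = - (a^2 + b^2 + c^2) / 2"
    using spin_energy_lower_bound(2)[OF closing(1) couplings] closing(2) by simp
  show ?thesis
    unfolding ground_state_def
    using spin_energy_lower_bound[OF _ couplings] min closing(1) by (metis order.antisym)
qed

lemma E_min_of_combination_eq_0:
  assumes couplings: "J$1 = b * c" "J$2 = a * c" "J$3 = a * b"
    and closing: "unit_spins t1 t2 t3" "a *\<^sub>R t1 + b *\<^sub>R t2 + c *\<^sub>R t3 = 0"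
  shows "E_min J = - (a^2 + b^2 + c^2) / 2"
  unfolding E_min_def
proof (rule cInf_eq_minimum)
  show "- (a^2 + b^2 + c^2) / 2 \<in> (\<lambda>(s1, s2, s3). spin_energy J s1 s2 s3) ` {(s1, s2, s3). unit_spins s1 s2 s3}"
    using spin_energy_lower_bound(2)[OF closing(1) couplings] closing
    by (auto intro!: image_eqI[where x = "(t1, t2, t3)"])
qed (use spin_energy_lower_bound(1)[OF _ couplings] in auto)

lemma ground_states_of_triangle_couplings:
  fixes J :: "real^3"
  assumes nz: "a \<noteq> 0" "b \<noteq> 0" "c \<noteq> 0" and heron: "heron a b c > 0"
    and couplings: "J$1 = b * c" "J$2 = a * c" "J$3 = a * b"
  shows "\<exists>s1 s2 s3. ground_state J s1 s2 s3"
    and "E_min J = - (a^2 + b^2 + c^2) / 2"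
    and "ground_state J s1 s2 s3 \<Longrightarrow> dim {s1, s2, s3} \<le> 2 \<and>
           s1 \<bullet> s2 = closing_cos a b c \<and> s1 \<bullet> s3 = closing_cos a c b \<and> s2 \<bullet> s3 = closing_cos b c a"
proof -
  obtain t1 t2 t3 where closing: "unit_spins t1 t2 t3" "a *\<^sub>R t1 + b *\<^sub>R t2 + c *\<^sub>R t3 = 0"
    using closing_triangle_exists[OF nz] abs_closing_cos_less_one[OF nz(1,2) heron] by fastforce
  note ground_state_iff = ground_state_iff_combination_eq_0[OF couplings closing]
  show "\<exists>s1 s2 s3. ground_state J s1 s2 s3"
    using closing ground_state_iff by blast
  show "E_min J = - (a^2 + b^2 + c^2) / 2"
    using E_min_of_combination_eq_0[OF couplings closing] .
  assume "ground_state J s1 s2 s3"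
  then have "norm s1 = 1" "norm s2 = 1" "norm s3 = 1" "a *\<^sub>R s1 + b *\<^sub>R s2 + c *\<^sub>R s3 = 0"
    unfolding ground_state_iff unit_spins_def by auto
  then show "dim {s1, s2, s3} \<le> 2 \<and>
      s1 \<bullet> s2 = closing_cos a b c \<and> s1 \<bullet> s3 = closing_cos a c b \<and> s2 \<bullet> s3 = closing_cos b c a"
    using inner_eq_closing_cos_of_combination[OF _ _ _ nz] dim_le_2_of_combination_eq_0[OF nz(1)] by blast
qed

theorem mainTheorem2:
  fixes J :: "real^3"
  assumes noIsing: "\<forall>i\<in>{0,1,2,3::nat}. \<not> (J \<bullet> E_ising i \<le> - norm J)"
  defines "J1 \<equiv> J$1" and "J2 \<equiv> J$2" and "J3 \<equiv> J$3"
  defines "u0 \<equiv> J1/(2 * J2) * (J2^2/J3^2 - 1) - J2/(2 * J1)"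
      and "v0 \<equiv> J1/(2 * J3) * (J3^2/J2^2 - 1) - J3/(2 * J1)"
      and "w0 \<equiv> J2/(2 * J3) * (J3^2/J1^2 - 1) - J3/(2 * J2)"
      and "\<mu>0 \<equiv> - 2 * J1^3 * J2^3 * J3^3 /
                 (J1^4 * (J2^2 - J3^2)^2 - 2 * J1^2 * J2^2 * J3^2 * (J2^2 + J3^2) + J2^4 * J3^4)"
  shows "(\<exists>s1 s2 s3. ground_state J s1 s2 s3) \<and>
         (\<forall>s1 s2 s3. ground_state J s1 s2 s3 \<longrightarrow>
            (let u = s1 \<bullet> s2; v = s1 \<bullet> s3; w = s2 \<bullet> s3 in
              dim {s1, s2, s3} \<le> 2 \<and> gram_det u v w = 0 \<and>
              -1 < u \<and> u < 1 \<and> -1 < v \<and> v < 1 \<and> -1 < w \<and> w < 1 \<and>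
              J1 = 2 * \<mu>0 * (u * v - w) \<and> J2 = 2 * \<mu>0 * (w * u - v) \<and> J3 = 2 * \<mu>0 * (v * w - u) \<and>
              u = u0 \<and> v = v0 \<and> w = w0 \<and>
              spin_energy J s1 s2 s3 = J1 * w + J2 * v + J3 * u)) \<and>
         E_min J = J1 * w0 + J2 * v0 + J3 * u0"
proof -
  obtain a b c where nz: "a \<noteq> 0" "b \<noteq> 0" "c \<noteq> 0" and heron: "heron a b c > 0"
    and couplings: "J$1 = b * c" "J$2 = a * c" "J$3 = a * b"
    using frustrated_factorization[OF frustrated_if_not_ising[OF noIsing]] .
  note J = couplings[folded J1_def J2_def J3_def]
  note ground_states = ground_states_of_triangle_couplings[OF nz heron couplings]
  have cos_bounds: "\<bar>closing_cos a b c\<bar> < 1" "\<bar>closing_cos a c b\<bar> < 1" "\<bar>closing_cos b c a\<bar> < 1"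
    using abs_closing_cos_less_one nz heron heron_commute by metis+
  have closed_forms: "u0 = closing_cos a b c" "v0 = closing_cos a c b" "w0 = closing_cos b c a"
    "\<mu>0 = 2 * a^2 * b^2 * c^2 / heron a b c"
    unfolding u0_def v0_def w0_def \<mu>0_def
    using closing_cos_of_couplings[OF nz J] multiplier_of_couplings[OF J] by simp_all
  have energy: "spin_energy J s1 s2 s3 = J1 * (s2 \<bullet> s3) + J2 * (s1 \<bullet> s3) + J3 * (s1 \<bullet> s2)" for s1 s2 s3
    unfolding spin_energy_def J1_def J2_def J3_def by (simp add: inner_commute)
  show ?thesis
  proof (intro conjI)
    show "\<exists>s1 s2 s3. ground_state J s1 s2 s3"
      by (rule ground_states(1))
    show "E_min J = J1 * w0 + J2 * v0 + J3 * u0"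
      unfolding ground_states(2) closed_forms J closing_cos_energy[OF nz] ..
  qed (use ground_states(3) gram_det_closing_cos[OF nz] cos_bounds closing_cos_lagrange[OF nz] heron in
        \<open>auto simp: Let_def energy closed_forms J abs_less_iff\<close>)
qed

end
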